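(* Let $n\ge 2$, $\sigma\ge 0$, let $z\in\mathbb{C}^n$ satisfy $|z_1|=\cdots=|z_n|=1$, let $W\in\mathbb{C}^{n\times n}$ be a Hermitian $z$-discordant matrix, and let $C=zz^*+\sigma W$. Let $x\in\mathbb{C}^n$ be a global optimizer of \[\max_{x\in\mathbb{C}^n} x^*Cx \quad\text{subject to } |x_1|=\cdots=|x_n|=1\] satisfying $z^*x=|z^*x|$. Then \[\|x-z\|_\infty\le 6\left(\sqrt{\log n}+29\sigma\right)\sigma n^{-1/2},\qquad \|x-z\|_2\le 12\sigma.\] Furthermore, if $\sigma\le\frac{1}{18}n^{1/4}$, then the semidefinite program \[\max_{X\in\mathbb{C}^{n\times n}} \operatorname{tr}(CX)\quad\text{subject to } \operatorname{diag}(X)=\mathbf{1},\ X\succeq 0\] has, as its unique solution, the rank-one matrix $X=xx^*$.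
   Context: For $z\in\mathbb{C}^n$ with unit-modulus entries, a matrix $W\in\mathbb{C}^{n\times n}$ is called $z$-discordant if it is Hermitian and satisfies both $\|W\|_{\mathrm{op}}\le 3\sqrt{n}$ (operator norm = largest singular value) and $\|Wz\|_\infty\le 3\sqrt{n\log n}$. Here $\mathbf{1}$ is the all-ones vector, $\operatorname{diag}(X)$ the vector of diagonal entries, $X\succeq0$ means Hermitian positive semidefinite, $\log$ the natural logarithm. *)

theory Defs
  imports "HOL-Analysis.Analysis"
begin

text \<open>Vectors in C^n are complex^'n, matrices are complex^'n^'n (n = CARD('n)).\<close>

definition hermitian :: "complex^'n^'n \<Rightarrow> bool" where
  "hermitian A \<longleftrightarrow> (\<forall>i j. A $ i $ j = cnj (A $ j $ i))"

definition cinner :: "complex^'n \<Rightarrow> complex^'n \<Rightarrow> complex" where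
  "cinner u v = (\<Sum>i\<in>UNIV. cnj (u $ i) * v $ i)"

definition qform :: "complex^'n^'n \<Rightarrow> complex^'n \<Rightarrow> complex" where
  "qform A v = cinner v (A *v v)"

definition outer :: "complex^'n \<Rightarrow> complex^'n \<Rightarrow> complex^'n^'n" where
  "outer u v = (\<chi> i j. u $ i * cnj (v $ j))"

definition inf_norm :: "complex^'n \<Rightarrow> real" where
  "inf_norm v = Max (range (\<lambda>i. cmod (v $ i)))"

definition op_norm :: "complex^'n^'n \<Rightarrow> real" where
  "op_norm A = onorm (\<lambda>v. A *v v)"

definition unimodular :: "complex^'n \<Rightarrow> bool" where
  "unimodular v \<longleftrightarrow> (\<forall>i. cmod (v $ i) = 1)"

definition discordant :: "complex^'n \<Rightarrow> complex^'n^'n \<Rightarrow> bool" where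
  "discordant z W \<longleftrightarrow> hermitian W
     \<and> op_norm W \<le> 3 * sqrt (real CARD('n))
     \<and> inf_norm (W *v z) \<le> 3 * sqrt (real CARD('n) * ln (real CARD('n)))"

definition trace_c :: "complex^'n^'n \<Rightarrow> complex" where
  "trace_c A = (\<Sum>i\<in>UNIV. A $ i $ i)"

definition psd :: "complex^'n^'n \<Rightarrow> bool" where
  "psd X \<longleftrightarrow> hermitian X \<and> (\<forall>v. qform X v \<in> \<real> \<and> 0 \<le> Re (qform X v))"

definition sdp_feasible :: "complex^'n^'n \<Rightarrow> bool" where
  "sdp_feasible X \<longleftrightarrow> (\<forall>i. X $ i $ i = 1) \<and> psd X"

end

theory Submission
  imports Defs
begin

text \<open>A global maximizer \<open>x\<close> of \<open>y\<^sup>* C y\<close> over the torus is stationary coordinatewise: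
  \<open>(C x)\<^sub>i = \<lambda>\<^sub>i x\<^sub>i\<close> with real \<open>\<lambda>\<^sub>i \<ge> C\<^sub>i\<^sub>i\<close>. Comparing the objective at \<open>x\<close> and at \<open>z\<close>, the
  operator-norm bound on \<open>W\<close> gives \<open>\<parallel>x - z\<parallel>\<^sub>2 = O(\<sigma>)\<close>. The stationarity equation
  \<open>\<lambda>\<^sub>i x\<^sub>i = \<bar>z\<^sup>* x\<bar> z\<^sub>i + \<sigma> (W x)\<^sub>i\<close>, with \<open>(W x)\<^sub>i\<close> controlled by \<open>\<parallel>W z\<parallel>\<^sub>\<infinity>\<close> and the \<open>\<ell>\<^sub>2\<close>
  bound, then pins down every coordinate. For the semidefinite program, \<open>S = diag \<lambda> - C\<close> is a
  dual certificate: \<open>S x = 0\<close>, and on the orthogonal complement of \<open>x\<close> the form of \<open>S\<close> is at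
  least \<open>min \<lambda>\<^sub>i - \<parallel>x - z\<parallel>\<^sup>2 - 3 \<sigma> sqrt n\<close>, which is positive when \<open>\<sigma> \<le> n\<^sup>1\<^sup>/\<^sup>4/18\<close>; so by
  complementary slackness \<open>x x\<^sup>*\<close> is the unique optimum.\<close>

lemma matrix_vector_mult_nth: "(A *v v) $ i = (\<Sum>j\<in>UNIV. A$i$j * v$j)"
  by (simp add: matrix_vector_mult_def)

lemma norm_vec_power2: "(norm (v::complex^'n))^2 = (\<Sum>i\<in>UNIV. (cmod (v$i))^2)"
  by (simp add: norm_vec_def L2_set_def sum_nonneg)

lemma norm_power2_unimodular: "unimodular v \<Longrightarrow> (norm v)^2 = real CARD('n)"
  for v :: "complex^'n"
  by (simp add: norm_vec_power2 unimodular_def)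

lemma cnj_mult_self_unimodular: "unimodular v \<Longrightarrow> cnj (v$i) * v$i = 1"
  unfolding unimodular_def by (metis complex_norm_square mult.commute of_real_1 power_one)

lemma cinner_self: "cinner v v = of_real ((norm v)^2)"
proof -
  have "cinner v v = (\<Sum>i\<in>UNIV. of_real ((cmod (v$i))^2))"
    unfolding cinner_def by (intro sum.cong refl) (metis complex_norm_square mult.commute)
  then show ?thesis by (simp add: norm_vec_power2)
qed

lemma cinner_self_unimodular: "unimodular v \<Longrightarrow> cinner v v = of_real (real CARD('n))"
  for v :: "complex^'n"
  by (simp add: cinner_self norm_power2_unimodular)

lemma cnj_cinner: "cnj (cinner u v) = cinner v u"
  by (simp add: cinner_def mult.commute)

lemma cinner_add_left: "cinner (u + v) w = cinner u w + cinner v w"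
  and cinner_add_right: "cinner u (v + w) = cinner u v + cinner u w"
  and cinner_diff_left: "cinner (u - v) w = cinner u w - cinner v w"
  and cinner_diff_right: "cinner u (v - w) = cinner u v - cinner u w"
  and cinner_scale_left: "cinner (c *s u) v = cnj c * cinner u v"
  and cinner_scale_right: "cinner u (c *s v) = c * cinner u v"
  by (simp_all add: cinner_def algebra_simps sum.distrib sum_subtractf sum_distrib_left)

lemma cinner_zero_left [simp]: "cinner 0 u = 0"
  and cinner_zero_right [simp]: "cinner u 0 = 0"
  by (simp_all add: cinner_def)

lemma norm_cinner_le: "cmod (cinner u v) \<le> norm u * norm v"
proof -
  have "cmod (cinner u v) \<le> (\<Sum>i\<in>UNIV. cmod (cnj (u$i) * v$i))"
    unfolding cinner_def by (rule norm_sum)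
  also have "\<dots> = (\<Sum>i\<in>UNIV. \<bar>cmod (u$i)\<bar> * \<bar>cmod (v$i)\<bar>)"
    by (simp add: norm_mult)
  also have "\<dots> \<le> L2_set (\<lambda>i. cmod (u$i)) UNIV * L2_set (\<lambda>i. cmod (v$i)) UNIV"
    by (rule L2_set_mult_ineq)
  finally show ?thesis by (simp add: norm_vec_def)
qed

lemma cinner_axis: "cinner (axis i 1) v = v $ i"
proof -
  have "cinner (axis i 1) v = (\<Sum>j\<in>UNIV. if j = i then v$j else 0)"
    unfolding cinner_def by (intro sum.cong) (auto simp: axis_def)
  then show ?thesis by simp
qed

lemma matrix_vector_mult_axis: "(A *v axis i 1) $ k = A $ k $ i"
proof -
  have "(A *v axis i 1) $ k = (\<Sum>j\<in>UNIV. if j = i then A$k$j else 0)"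
    unfolding matrix_vector_mult_nth by (intro sum.cong) (auto simp: axis_def)
  then show ?thesis by simp
qed

lemma qform_axis: "qform A (axis i 1) = A $ i $ i"
  by (simp add: qform_def cinner_axis matrix_vector_mult_axis)

lemma norm_axis_complex: "norm (axis i (1::complex) :: complex^'n) = 1"
proof -
  have "(norm (axis i (1::complex) :: complex^'n))^2 = (\<Sum>j\<in>UNIV. if j = i then 1 else 0)"
    unfolding norm_vec_power2 by (intro sum.cong) (auto simp: axis_def)
  then show ?thesis by simp
qed

lemma hermitian_cinner_adjoint:
  assumes "hermitian A"
  shows "cinner u (A *v v) = cinner (A *v u) v"
proof -
  have "cinner u (A *v v) = (\<Sum>j\<in>UNIV. \<Sum>i\<in>UNIV. cnj (u$i) * (A$i$j * v$j))"
    by (subst sum.swap) (simp add: cinner_def matrix_vector_mult_nth sum_distrib_left)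
  also have "\<dots> = (\<Sum>j\<in>UNIV. cnj (\<Sum>i\<in>UNIV. A$j$i * u$i) * v$j)"
  proof (rule sum.cong[OF refl])
    fix j
    have "cnj (\<Sum>i\<in>UNIV. A$j$i * u$i) * v$j = (\<Sum>i\<in>UNIV. cnj (A$j$i) * cnj (u$i) * v$j)"
      by (simp add: sum_distrib_right)
    also have "\<dots> = (\<Sum>i\<in>UNIV. cnj (u$i) * (A$i$j * v$j))"
      using assms unfolding hermitian_def by (intro sum.cong refl) (metis mult.commute mult.left_commute)
    finally show "(\<Sum>i\<in>UNIV. cnj (u$i) * (A$i$j * v$j)) = cnj (\<Sum>i\<in>UNIV. A$j$i * u$i) * v$j"
      by simp
  qed
  finally show ?thesis by (simp add: cinner_def matrix_vector_mult_nth)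
qed

lemma hermitian_diag_real: "hermitian A \<Longrightarrow> A $ i $ i = of_real (Re (A $ i $ i))"
  unfolding hermitian_def by (metis Reals_cnj_iff of_real_Re)

lemma hermitian_diff: "hermitian A \<Longrightarrow> hermitian B \<Longrightarrow> hermitian (A - B)"
  unfolding hermitian_def by (metis complex_cnj_diff vector_minus_component)

lemma hermitian_outer: "hermitian (outer v v)"
  unfolding hermitian_def outer_def by simp

lemma outer_mult_vec: "outer v v *v w = cinner v w *s v"
  by (simp add: vec_eq_iff matrix_vector_mult_nth outer_def cinner_def sum_distrib_left mult_ac)

lemma qform_outer: "qform (outer v v) w = of_real ((cmod (cinner v w))^2)"
  unfolding qform_def outer_mult_vec cinner_scale_right
  by (metis cnj_cinner complex_norm_square)

lemma qform_diff: "qform (A - B) v = qform A v - qform B v"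
  unfolding qform_def by (simp add: matrix_vector_mult_diff_rdistrib cinner_diff_right)

lemma qform_add_axis:
  assumes "hermitian A"
  shows "qform A (x + t *s axis i 1) = qform A x + cnj t * (A *v x)$i + t * cnj ((A *v x)$i)
          + of_real ((cmod t)^2) * A$i$i"
proof -
  have "cinner x (A *v axis i 1) = cnj ((A *v x)$i)"
    using hermitian_cinner_adjoint[OF assms, of x "axis i 1"] by (metis cinner_axis cnj_cinner)
  moreover have "cnj t * t = of_real ((cmod t)^2)"
    by (metis complex_norm_square mult.commute)
  moreover have "qform A (x + t *s axis i 1) = qform A x + t * cinner x (A *v axis i 1)
      + cnj t * cinner (axis i 1) (A *v x) + (cnj t * t) * cinner (axis i 1) (A *v axis i 1)"
    unfolding qform_def
    by (simp add: matrix_vector_right_distrib vec.scale cinner_add_left cinner_add_right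
        cinner_scale_left cinner_scale_right algebra_simps)
  ultimately show ?thesis
    by (simp add: cinner_axis matrix_vector_mult_axis)
qed

lemma qform_add_kernel:
  assumes H: "hermitian S" and S0: "S *v x = 0"
  shows "qform S (c *s x + u) = qform S u"
proof -
  have "S *v (c *s x + u) = S *v u"
    by (simp add: matrix_vector_right_distrib vec.scale S0)
  moreover have "cinner x (S *v u) = 0" using hermitian_cinner_adjoint[OF H, of x u] S0 by simp
  ultimately show ?thesis unfolding qform_def by (simp add: cinner_add_left cinner_scale_left)
qed

lemma norm_matrix_vector_mult_le: "norm (A *v v) \<le> op_norm A * norm (v::complex^'n)"
  unfolding op_norm_def by (rule onorm) (rule matrix_vector_mul_bounded_linear)

lemma cmod_matrix_vector_mult_nth_le: "cmod ((A *v v) $ i) \<le> op_norm A * norm (v::complex^'n)"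
  using Finite_Cartesian_Product.norm_nth_le[of "A *v v" i] norm_matrix_vector_mult_le[of A v] by linarith

lemma cmod_diag_le_op_norm: "cmod (A $ i $ i) \<le> op_norm A" for A :: "complex^'n^'n"
  using cmod_matrix_vector_mult_nth_le[of A "axis i 1" i]
  by (simp add: matrix_vector_mult_axis norm_axis_complex)

lemma Re_qform_le_op_norm: "Re (qform A v) \<le> op_norm A * (norm v)^2"
proof -
  have "Re (qform A v) \<le> norm v * norm (A *v v)"
    unfolding qform_def using complex_Re_le_cmod norm_cinner_le order_trans by blast
  also have "\<dots> \<le> norm v * (op_norm A * norm v)"
    by (intro mult_left_mono norm_matrix_vector_mult_le) auto
  finally show ?thesis by (simp add: power2_eq_square mult_ac)
qed

definition diag_mat :: "('n \<Rightarrow> real) \<Rightarrow> complex^'n^'n" where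
  "diag_mat d = (\<chi> i k. if i = k then of_real (d i) else 0)"

lemma diag_mat_mult_vec_nth: "(diag_mat d *v v) $ i = of_real (d i) * v $ i"
proof -
  have "(diag_mat d *v v) $ i = (\<Sum>k\<in>UNIV. if k = i then of_real (d i) * v$i else 0)"
    unfolding matrix_vector_mult_nth diag_mat_def by (intro sum.cong) auto
  then show ?thesis by simp
qed

lemma qform_diag_mat: "qform (diag_mat d) v = of_real (\<Sum>i\<in>UNIV. d i * (cmod (v$i))^2)"
proof -
  have "qform (diag_mat d) v = (\<Sum>i\<in>UNIV. of_real (d i * (cmod (v$i))^2))"
    unfolding qform_def cinner_def diag_mat_mult_vec_nth
    by (intro sum.cong refl) (metis complex_norm_square mult.commute mult.left_commute of_real_mult)
  then show ?thesis by simp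
qed

lemma hermitian_diag_mat: "hermitian (diag_mat d)"
  unfolding hermitian_def diag_mat_def by simp

subsection \<open>Stationarity of maximizers on the torus\<close>

lemma cnj_mult_eq_cmod_if_maximal:
  fixes u h :: complex
  assumes u: "cmod u = 1" and max: "\<And>w. cmod w = 1 \<Longrightarrow> Re (cnj w * h) \<le> Re (cnj u * h)"
  shows "cnj u * h = of_real (cmod h)"
proof (cases "h = 0")
  case False
  define w where "w = h / of_real (cmod h)"
  have w1: "cmod w = 1" using False by (simp add: w_def norm_divide)
  have "cnj w * h = of_real (cmod h)"
    unfolding w_def using False
    by (simp add: complex_norm_square[symmetric] mult.commute power2_eq_square field_simps)
  then have le: "cmod (cnj u * h) \<le> Re (cnj u * h)"
    using max[OF w1] u by (simp add: norm_mult)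
  then have "Im (cnj u * h) = 0"
    using cmod_power2[of "cnj u * h"] complex_Re_le_cmod[of "cnj u * h"] by (simp add: power2_eq_square)
  moreover have "Re (cnj u * h) = cmod h"
    using le complex_Re_le_cmod[of "cnj u * h"] u by (simp add: norm_mult)
  ultimately show ?thesis by (simp add: complex_eq_iff)
qed simp

text \<open>Moving a single coordinate of a maximizer along the unit circle cannot increase the form.\<close>

lemma unimodular_maximizer_stationary:
  fixes A :: "complex^'n^'n" and x :: "complex^'n"
  assumes herm: "hermitian A" and ux: "unimodular x"
    and opt: "\<And>y. unimodular y \<Longrightarrow> Re (qform A y) \<le> Re (qform A x)"
  obtains l :: real where "(A *v x)$i = of_real l * x$i" and "Re (A$i$i) \<le> l"
proof -
  define g where "g = (A *v x)$i"
  define c where "c = Re (A$i$i)"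
  define h where "h = g - of_real c * x$i"
  have xx: "cnj (x$i) * x$i = 1" using ux by (rule cnj_mult_self_unimodular)
  have Aii: "A$i$i = of_real c" unfolding c_def by (rule hermitian_diag_real[OF herm])
  have key: "Re (cnj w * h) \<le> Re (cnj (x$i) * h)" if w: "cmod w = 1" for w
  proof -
    define t where "t = w - x$i"
    have "unimodular (x + t *s axis i 1)"
      using ux w unfolding unimodular_def by (simp add: t_def axis_def)
    then have "Re (qform A (x + t *s axis i 1)) \<le> Re (qform A x)" by (rule opt)
    then have le: "Re (cnj t * g + t * cnj g) + (cmod t)^2 * c \<le> 0"
      unfolding qform_add_axis[OF herm] g_def[symmetric] Aii by simp
    have ww: "cnj w * w = 1"
      by (metis w complex_norm_square mult.commute of_real_1 power_one)
    have "(cmod t)^2 = Re (cnj t * t)" by (metis complex_norm_square mult.commute Re_complex_of_real)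
    also have "cnj t * t = 2 - cnj w * x$i - cnj (x$i) * w"
      unfolding t_def using ww xx by (simp add: algebra_simps)
    finally have ct: "(cmod t)^2 = 2 - 2 * Re (cnj w * x$i)"
      by (simp add: mult.commute)
    show ?thesis
      using le ct xx unfolding h_def t_def by (simp add: algebra_simps)
  qed
  have hx: "cnj (x$i) * h = of_real (cmod h)"
    using ux key unfolding unimodular_def by (blast intro: cnj_mult_eq_cmod_if_maximal)
  have "h = (cnj (x$i) * x$i) * h" using xx by simp
  also have "\<dots> = x$i * of_real (cmod h)" unfolding hx[symmetric] by (simp add: mult_ac)
  finally have "g = of_real (cmod h + c) * x$i" unfolding h_def by (simp add: algebra_simps)
  then show ?thesis using that[of "cmod h + c"] unfolding g_def c_def by simp
qed

subsection \<open>Positive semidefinite matrices\<close>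

lemma psd_outer: "psd (outer v v)"
  unfolding psd_def using hermitian_outer by (simp add: qform_outer)

lemma sdp_feasible_outer:
  assumes "unimodular x"
  shows "sdp_feasible (outer x x)"
  unfolding sdp_feasible_def using psd_outer[of x] cnj_mult_self_unimodular[OF assms]
  by (simp add: outer_def mult.commute)

lemma psd_diag_nonneg: "psd X \<Longrightarrow> 0 \<le> Re (X$j$j)"
  unfolding psd_def by (metis qform_axis)

lemma le_mult_if_quadratic_nonneg:
  fixes a G Q :: real
  assumes a: "0 \<le> a" and G: "0 \<le> G" and nonneg: "\<And>s. 0 \<le> Q - 2 * s * G + s^2 * G * a"
  shows "G \<le> a * Q"
proof (cases "a = 0")
  case True
  have "G = 0"
  proof (rule ccontr)
    assume "G \<noteq> 0"
    then have "0 < G" using G by simp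
    moreover have "0 \<le> Q - 2 * ((Q + 1) / (2 * G)) * G"
      using nonneg[of "(Q + 1) / (2 * G)"] True by simp
    ultimately show False by (simp add: field_simps)
  qed
  then show ?thesis using True by simp
next
  case False
  then have ap: "0 < a" using a by simp
  have "0 \<le> Q - 2 * (1/a) * G + (1/a)^2 * G * a" by (rule nonneg)
  also have "\<dots> = Q - G / a" using ap by (simp add: power2_eq_square field_simps)
  finally show ?thesis using ap by (simp add: divide_le_eq mult.commute)
qed

lemma psd_cauchy_schwarz:
  assumes X: "psd X"
  shows "(cmod ((X *v w)$j))^2 \<le> Re (X$j$j) * Re (qform X w)"
proof -
  define g where "g = (X *v w)$j"
  define a where "a = Re (X$j$j)"
  define Q where "Q = Re (qform X w)"
  have H: "hermitian X" using X unfolding psd_def by blast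
  have gg: "cnj g * g = of_real ((cmod g)^2)" by (metis complex_norm_square mult.commute)
  have "0 \<le> Q - 2 * s * (cmod g)^2 + s^2 * (cmod g)^2 * a" for s :: real
  proof -
    define t where "t = - (of_real s * g)"
    have "0 \<le> Re (qform X (w + t *s axis j 1))" using X unfolding psd_def by blast
    also have "qform X (w + t *s axis j 1) = qform X w + cnj t * g + t * cnj g + of_real ((cmod t)^2) * X$j$j"
      unfolding g_def by (rule qform_add_axis[OF H])
    also have "cnj t * g = - of_real (s * (cmod g)^2)"
      unfolding t_def using gg by (simp add: mult_ac)
    also have "t * cnj g = - of_real (s * (cmod g)^2)"
      unfolding t_def using gg by (simp add: mult_ac)
    also have "(cmod t)^2 = s^2 * (cmod g)^2" unfolding t_def by (simp add: norm_mult power_mult_distrib)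
    finally show ?thesis
      using hermitian_diag_real[OF H, of j] unfolding a_def Q_def by (simp add: algebra_simps)
  qed
  then show ?thesis
    using le_mult_if_quadratic_nonneg[OF psd_diag_nonneg[OF X, of j] zero_le_power2]
    unfolding g_def a_def Q_def by blast
qed

lemma psd_diag_zero:
  assumes X: "psd X" and z: "X$i$i = 0"
  shows "X$i$j = 0"
proof -
  have "(cmod ((X *v axis i 1)$j))^2 \<le> 0"
    using psd_cauchy_schwarz[OF X, of "axis i 1" j] z by (simp add: qform_axis)
  then have "X$j$i = 0" by (simp add: matrix_vector_mult_axis)
  moreover have "X$i$j = cnj (X$j$i)" using X unfolding psd_def hermitian_def by blast
  ultimately show ?thesis by simp
qed

lemma psd_diff_outer_column:
  assumes X: "psd X" and ap: "0 < Re (X$j$j)"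
  defines "v \<equiv> of_real (1 / sqrt (Re (X$j$j))) *s column j X"
  shows "psd (X - outer v v)"
    and "(X - outer v v)$i$i = X$i$i - of_real ((cmod (X$i$j))^2 / Re (X$j$j))"
proof -
  define a where "a = Re (X$j$j)"
  have H: "hermitian X" using X unfolding psd_def by blast
  show "psd (X - outer v v)"
    unfolding psd_def
  proof (intro conjI allI)
    show "hermitian (X - outer v v)" by (rule hermitian_diff[OF H hermitian_outer])
  next
    fix w
    have "cinner (column j X) w = (X *v w)$j"
      using H unfolding cinner_def matrix_vector_mult_nth hermitian_def column_def
      by (metis (no_types, lifting) complex_cnj_cnj vec_lambda_beta)
    then have cv: "cinner v w = of_real (1 / sqrt a) * (X *v w)$j"
      unfolding v_def a_def cinner_scale_left by simp
    have q': "qform (X - outer v v) w = qform X w - of_real ((cmod (cinner v w))^2)"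
      unfolding qform_diff qform_outer ..
    then show "qform (X - outer v v) w \<in> \<real>" using X unfolding psd_def by simp
    have "(cmod (cinner v w))^2 = (cmod ((X *v w)$j))^2 / a"
      unfolding cv using ap unfolding a_def by (simp add: norm_divide power_divide)
    also have "\<dots> \<le> Re (qform X w)"
      using psd_cauchy_schwarz[OF X, of w j] ap unfolding a_def by (simp add: divide_le_eq mult.commute)
    finally show "0 \<le> Re (qform (X - outer v v) w)" unfolding q' by simp
  qed
  have "v$i * cnj (v$i) = of_real (1 / a) * (X$i$j * cnj (X$i$j))"
    unfolding v_def a_def column_def using ap by (simp add: real_sqrt_mult[symmetric] flip: of_real_mult)
  then have "v$i * cnj (v$i) = of_real ((cmod (X$i$j))^2 / a)"
    by (metis complex_norm_square divide_inverse inverse_eq_divide mult.commute of_real_mult)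
  then show "(X - outer v v)$i$i = X$i$i - of_real ((cmod (X$i$j))^2 / Re (X$j$j))"
    unfolding a_def by (simp add: outer_def)
qed

text \<open>Induction on the number of nonzero diagonal entries: subtracting the outer product of a
  normalized column kills the corresponding diagonal entry and creates no new nonzero ones.\<close>

lemma psd_eq_sum_outer: "psd X \<Longrightarrow> \<exists>(k::nat) v. X = (\<Sum>l<k. outer (v l) (v l))"
proof (induction "card {i. X$i$i \<noteq> 0}" arbitrary: X rule: less_induct)
  case less
  show ?case
  proof (cases "\<exists>j. X$j$j \<noteq> 0")
    case False
    then have "X = 0" using psd_diag_zero[OF less.prems] by (simp add: vec_eq_iff)
    then have "X = (\<Sum>l<(0::nat). outer (v l) (v l))" for v by simp
    then show ?thesis by blast
  next
    case True
    then obtain j where j: "X$j$j \<noteq> 0" by blast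
    have Xjj: "X$j$j = of_real (Re (X$j$j))"
      using less.prems unfolding psd_def by (blast intro: hermitian_diag_real)
    then have ap: "0 < Re (X$j$j)"
      using j psd_diag_nonneg[OF less.prems, of j] by (metis less_eq_real_def of_real_0)
    define v where "v = of_real (1 / sqrt (Re (X$j$j))) *s column j X"
    define X' where "X' = X - outer v v"
    note X' = psd_diff_outer_column[OF less.prems ap, folded v_def X'_def]
    have "{i. X'$i$i \<noteq> 0} \<subset> {i. X$i$i \<noteq> 0}"
    proof
      show "{i. X'$i$i \<noteq> 0} \<subseteq> {i. X$i$i \<noteq> 0}"
        using X'(2) psd_diag_zero[OF less.prems] by auto
      have "cmod (X$j$j) = Re (X$j$j)" using Xjj ap by (metis abs_of_pos norm_of_real)
      then have "X'$j$j = X$j$j - of_real (Re (X$j$j))" using X'(2)[of j] ap by (simp add: power2_eq_square)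
      then have "X'$j$j = 0" using Xjj by (metis diff_self)
      then show "{i. X'$i$i \<noteq> 0} \<noteq> {i. X$i$i \<noteq> 0}" using j by blast
    qed
    then have "card {i. X'$i$i \<noteq> 0} < card {i. X$i$i \<noteq> 0}" by (rule psubset_card_mono[rotated]) simp
    then obtain k :: nat and w where w: "X' = (\<Sum>l<k. outer (w l) (w l))"
      using less.hyps X'(1) by blast
    have "(\<Sum>l<k. outer ((w(k := v)) l) ((w(k := v)) l)) = X'"
      unfolding w by (intro sum.cong) auto
    then have "X = (\<Sum>l<Suc k. outer ((w(k := v)) l) ((w(k := v)) l))"
      unfolding X'_def by (simp add: algebra_simps)
    then show ?thesis by blast
  qed
qed

subsection \<open>Dual certificates for the semidefinite relaxation\<close>

lemma trace_mult_outer: "trace_c (A ** outer v v) = qform A v"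
proof -
  have "trace_c (A ** outer v v) = (\<Sum>i\<in>UNIV. cnj (v$i) * (\<Sum>k\<in>UNIV. A$i$k * v$k))"
    by (simp add: trace_c_def matrix_matrix_mult_def outer_def sum_distrib_left mult_ac)
  then show ?thesis by (simp add: qform_def cinner_def matrix_vector_mult_nth)
qed

lemma trace_mult_sum: "trace_c (A ** (\<Sum>l\<in>L. B l)) = (\<Sum>l\<in>L. trace_c (A ** B l))"
  by (induction L rule: infinite_finite_induct)
    (simp_all add: trace_c_def matrix_add_ldistrib sum.distrib)

lemma sum_outer_multiples_eq_outer:
  assumes x: "unimodular x" and X: "X = (\<Sum>l<k. outer (v l) (v l))" and diag: "\<And>i. X$i$i = 1"
    and v: "\<And>l. l < k \<Longrightarrow> \<exists>c. v l = c *s x"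
  shows "X = outer x x"
proof -
  have "\<forall>l\<in>{..<k}. \<exists>c. v l = c *s x" using v by simp
  then obtain c where c: "\<forall>l\<in>{..<k}. v l = c l *s x" by (metis bchoice)
  define t where "t = (\<Sum>l<k. c l * cnj (c l))"
  have X_t: "X$i$j = t * (x$i * cnj (x$j))" for i j
  proof -
    have "X$i$j = (\<Sum>l<k. v l $ i * cnj (v l $ j))" unfolding X by (simp add: outer_def)
    also have "\<dots> = t * (x$i * cnj (x$j))"
      unfolding t_def sum_distrib_right by (intro sum.cong) (simp_all add: c mult_ac)
    finally show ?thesis .
  qed
  have "t = 1"
    using X_t[of undefined undefined] diag cnj_mult_self_unimodular[OF x] by (simp add: mult.commute)
  then show ?thesis using X_t by (simp add: vec_eq_iff outer_def)
qed

text \<open>Weak duality with complementary slackness.\<close>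

lemma sdp_unique_optimum_of_certificate:
  fixes C :: "complex^'n^'n" and x :: "complex^'n" and d :: "'n \<Rightarrow> real"
  defines "S \<equiv> diag_mat d - C"
  assumes x: "unimodular x" and Sx: "S *v x = 0"
    and S_nonneg: "\<And>v. 0 \<le> Re (qform S v)"
    and S_kernel: "\<And>v. Re (qform S v) = 0 \<Longrightarrow> \<exists>c. v = c *s x"
    and X: "sdp_feasible X" and X_ne: "X \<noteq> outer x x"
  shows "Re (trace_c (C ** X)) < Re (trace_c (C ** outer x x))"
proof -
  obtain k :: nat and v where X_eq: "X = (\<Sum>l<k. outer (v l) (v l))"
    using X psd_eq_sum_outer unfolding sdp_feasible_def by blast
  have X_diag: "X$i$i = 1" for i using X unfolding sdp_feasible_def by blast
  have diag: "(\<Sum>l<k. (cmod (v l $ i))^2) = 1" for i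
  proof -
    have "X$i$i = (\<Sum>l<k. v l $ i * cnj (v l $ i))" unfolding X_eq by (simp add: outer_def)
    also have "\<dots> = of_real (\<Sum>l<k. (cmod (v l $ i))^2)"
      unfolding of_real_sum by (intro sum.cong refl) (rule complex_norm_square[symmetric])
    finally show ?thesis using X_diag[of i] by (metis of_real_eq_1_iff)
  qed
  have Re_C: "Re (qform C w) = (\<Sum>i\<in>UNIV. d i * (cmod (w$i))^2) - Re (qform S w)" for w
    unfolding S_def qform_diff qform_diag_mat by simp
  have "Re (trace_c (C ** X)) = (\<Sum>l<k. \<Sum>i\<in>UNIV. d i * (cmod (v l $ i))^2) - (\<Sum>l<k. Re (qform S (v l)))"
    unfolding X_eq trace_mult_sum trace_mult_outer Re_sum Re_C by (simp add: sum_subtractf)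
  also have "(\<Sum>l<k. \<Sum>i\<in>UNIV. d i * (cmod (v l $ i))^2) = (\<Sum>i\<in>UNIV. d i)"
    by (subst sum.swap) (simp add: sum_distrib_left[symmetric] diag)
  finally have tr_X: "Re (trace_c (C ** X)) = (\<Sum>i\<in>UNIV. d i) - (\<Sum>l<k. Re (qform S (v l)))" .
  have "Re (trace_c (C ** outer x x)) = (\<Sum>i\<in>UNIV. d i)"
    using x Sx unfolding trace_mult_outer Re_C by (simp add: qform_def unimodular_def)
  moreover have "0 < (\<Sum>l<k. Re (qform S (v l)))"
  proof (rule ccontr)
    assume "\<not> ?thesis"
    then have "(\<Sum>l<k. Re (qform S (v l))) = 0"
      using S_nonneg by (meson not_less order.antisym sum_nonneg)
    then have "\<exists>c. v l = c *s x" if "l < k" for l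
      using that S_nonneg S_kernel by (simp add: sum_nonneg_eq_0_iff)
    then have "X = outer x x" using sum_outer_multiples_eq_outer[OF x X_eq X_diag] by blast
    with X_ne show False ..
  qed
  ultimately show ?thesis using tr_X by linarith
qed

lemma ln_le_sqrt: "1 \<le> x \<Longrightarrow> ln x \<le> sqrt x"
proof -
  assume x: "1 \<le> x"
  define q where "q = sqrt x"
  have q: "1 \<le> q" "x = q * q" using x by (auto simp: q_def)
  have "ln (q/2) \<le> q/2 - 1" using q by (intro ln_le_minus_one) auto
  moreover have "ln 2 \<le> (2::real) - 1" by (intro ln_le_minus_one) auto
  moreover have "ln (q/2) = ln q - ln 2" using q by (intro ln_divide_pos) auto
  moreover have "ln x = 2 * ln q" using q by (simp add: ln_mult_pos)
  ultimately show "ln x \<le> sqrt x" unfolding q_def[symmetric] by linarith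
qed

lemma root_4_power2: "0 \<le> y \<Longrightarrow> (root 4 y)^2 = sqrt y"
proof -
  assume y: "0 \<le> y"
  have "((root 4 y)^2)^2 = y" using y by (simp flip: power_mult)
  then show ?thesis by (metis real_sqrt_unique zero_le_power2)
qed

lemma norm_diff_le_of_scaled_eq:
  fixes u v e :: complex and l m :: real
  assumes u: "cmod u = 1" and v: "cmod v = 1" and l: "0 \<le> l" and m: "0 < m"
    and eq: "of_real l * u = of_real m * v + e"
  shows "cmod (u - v) \<le> 2 * cmod e / m"
proof -
  define p where "p = of_real (l/m) * u"
  have "u - p = of_real (1 - l/m) * u" unfolding p_def by (simp add: algebra_simps)
  then have "cmod (u - p) = \<bar>1 - l/m\<bar>" using u by (simp only: norm_mult norm_of_real) simp
  also have "\<dots> = \<bar>cmod v - cmod p\<bar>"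
    using u v l m unfolding p_def by (simp add: norm_mult norm_divide)
  also have "\<dots> \<le> cmod (p - v)" by (metis norm_minus_commute norm_triangle_ineq3)
  finally have "cmod (u - v) \<le> 2 * cmod (p - v)"
    using norm_triangle_ineq[of "u - p" "p - v"] by simp
  moreover have "p - v = e / of_real m" using eq m unfolding p_def by (simp add: field_simps)
  ultimately show ?thesis using m by (simp add: norm_divide)
qed

lemma neg_scaled_eq_bound:
  fixes u v e :: complex and l m :: real
  assumes "cmod u = 1" "cmod v = 1" "l < 0" "of_real l * u = of_real m * v + e"
  shows "m - cmod e \<le> - l"
proof -
  have "cmod (of_real l * u) = - l" using assms(1,3) by (simp add: norm_mult)
  then have "cmod (of_real m * v + e) = - l" using assms(4) by simp
  moreover have "cmod (of_real m * v) - cmod e \<le> cmod (of_real m * v + e)" by (rule norm_diff_ineq)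
  moreover have "m \<le> cmod (of_real m * v)" using assms by (simp add: norm_mult)
  ultimately show ?thesis by linarith
qed

text \<open>The arithmetic behind the \<open>\<infinity>\<close>-norm bound, with \<open>q = sqrt n\<close>, \<open>L = sqrt (ln n)\<close>,
  \<open>d = \<parallel>x - z\<parallel>\<close> and \<open>q\<^sup>2 - d\<^sup>2/2 = \<bar>z\<^sup>* x\<bar>\<close>; the bound is trivial unless its right-hand side is below 2.\<close>

lemma linf_arith_regime:
  fixes s q L :: real
  assumes s: "0 \<le> s" and q: "1 \<le> q" and L: "0 \<le> L" "L^2 \<le> q"
    and R: "6 * (L + 29 * s) * s / q < 2"
  shows "87 * s^2 < q" "9 * (s * L) < q"
proof -
  have "6 * (L + 29 * s) * s < 2 * q" using R q by (simp add: divide_less_eq)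
  moreover have "6 * (L + 29 * s) * s = 6 * (L * s) + 174 * s^2"
    by (simp add: power2_eq_square algebra_simps)
  moreover have "0 \<le> L * s" using s L by simp
  ultimately show s87: "87 * s^2 < q" by linarith
  have "(9 * (s * L))^2 = 81 * (s^2 * L^2)" by (simp add: power_mult_distrib)
  also have "\<dots> \<le> 81 * (s^2 * q)" using L by (intro mult_left_mono) auto
  also have "\<dots> \<le> (87 * s^2) * q" using q by (simp add: mult_right_mono)
  also have "\<dots> < q * q" using s87 q by (simp add: mult_strict_right_mono)
  finally have "(9 * (s * L))^2 < q^2" by (simp add: power2_eq_square)
  then show "9 * (s * L) < q" using q power2_less_imp_less by fastforce
qed

lemma linf_arith_aligned:
  fixes s q L d :: real
  assumes s: "0 \<le> s" and q: "1 \<le> q" and s87: "87 * s^2 < q" and sL: "9 * (s * L) < q"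
    and L: "0 \<le> L" and d: "0 \<le> d" "d^2 \<le> 72 * s^2" and d9: "d \<le> 9 * s"
  shows "0 < q^2 - d^2/2" and "2 * (3 * s * q * (L + d)) / (q^2 - d^2/2) \<le> 6 * (L + 29 * s) * s / q"
proof -
  have "(d^2/2) * (L + 29 * s) \<le> (36 * s^2) * (L + 29 * s)" using d s L by (intro mult_right_mono) auto
  also have "\<dots> = 4 * s * (9 * (s * L)) + 12 * s * (87 * s^2)" by (simp add: power2_eq_square algebra_simps)
  also have "\<dots> \<le> 4 * s * q + 12 * s * q" using s s87 sL by (intro add_mono mult_left_mono) auto
  finally have h2: "(d^2/2) * (L + 29 * s) \<le> 16 * (s * q)" by (simp add: ac_simps)
  have "q^2 * d \<le> q^2 * (9 * s)" using d9 by (intro mult_left_mono) auto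
  moreover have "s * q \<le> s * q^2" using s q by (intro mult_left_mono) (auto simp: power2_eq_square)
  moreover have "(q^2 - d^2/2) * (L + 29 * s) - q^2 * (L + d)
      = 29 * (s * q^2) - q^2 * d - (d^2/2) * (L + 29 * s)"
    by (simp add: algebra_simps)
  moreover have "q^2 * (9 * s) = 9 * (s * q^2)" "0 \<le> s * q^2" using s by simp_all
  ultimately have key: "q^2 * (L + d) \<le> (q^2 - d^2/2) * (L + 29 * s)"
    using h2 by linarith
  have "d^2/2 < q" using d s87 zero_le_power2[of s] by linarith
  also have "q \<le> q^2" using q by (simp add: power2_eq_square)
  finally show pos: "0 < q^2 - d^2/2" by simp
  have "2 * (3 * s * q * (L + d)) * q = 6 * s * (q^2 * (L + d))" by (simp add: power2_eq_square algebra_simps)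
  also have "\<dots> \<le> 6 * s * ((q^2 - d^2/2) * (L + 29 * s))" using key s by (intro mult_left_mono) auto
  also have "\<dots> = (6 * (L + 29 * s) * s) * (q^2 - d^2/2)" by (simp add: algebra_simps)
  finally have "2 * (3 * s * q * (L + d)) * q / ((q^2 - d^2/2) * q)
      \<le> (6 * (L + 29 * s) * s) * (q^2 - d^2/2) / ((q^2 - d^2/2) * q)"
    using pos q by (intro divide_right_mono) auto
  then show "2 * (3 * s * q * (L + d)) / (q^2 - d^2/2) \<le> 6 * (L + 29 * s) * s / q"
    using pos q by simp
qed

lemma linf_arith_reversed:
  fixes s q L d :: real
  assumes s: "0 \<le> s" and q: "1 \<le> q" and s87: "87 * s^2 < q" and sL: "9 * (s * L) < q"
    and d72: "d^2 \<le> 72 * s^2" and d9: "d \<le> 9 * s"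
  shows "3 * s * q * (L + d + 1) - 1 < q^2 - d^2/2"
proof -
  have a: "3 * s * q * L < q^2 / 3"
  proof -
    have "3 * s * q * L = q * (9 * (s * L)) / 3" by simp
    also have "\<dots> < q * q / 3" using q sL by (intro divide_strict_right_mono mult_strict_left_mono) auto
    finally show ?thesis by (simp add: power2_eq_square)
  qed
  have b: "3 * s * q * d \<le> 27 * q^2 / 87"
  proof -
    have "3 * s * q * d \<le> 3 * s * q * (9 * s)" using s q d9 by (intro mult_left_mono) auto
    also have "\<dots> = 27 * q * (87 * s^2) / 87" by (simp add: power2_eq_square)
    also have "\<dots> \<le> 27 * q * q / 87" using q s87 by (intro divide_right_mono mult_left_mono) auto
    finally show ?thesis by (simp add: power2_eq_square)
  qed
  have c: "3 * s * q \<le> (81 * q^2 / 87 + q) / 6"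
  proof -
    have "(9 * s - 1)^2 = 81 * s^2 - 18 * s + 1" by (simp add: power2_eq_square algebra_simps)
    then have "18 * s \<le> 81 * s^2 + 1" using zero_le_power2[of "9 * s - 1"] by linarith
    also have "\<dots> \<le> 81 * q / 87 + 1" using s87 by simp
    finally have "18 * s * q \<le> (81 * q / 87 + 1) * q" using q by (intro mult_right_mono) auto
    then show ?thesis by (simp add: power2_eq_square algebra_simps)
  qed
  have "(2 * q - 3)^2 = 4 * q^2 - 12 * q + 9" by (simp add: power2_eq_square algebra_simps)
  then have g: "0 < 35 * q^2 - 101 * q + 174" using zero_le_power2[of "2 * q - 3"] q by linarith
  have "d^2/2 \<le> 36 * q / 87" using d72 s87 by simp
  then show ?thesis using a b c g by (simp add: algebra_simps)
qed

text \<open>The arithmetic behind the dual certificate, with \<open>q = sqrt n\<close>; the constant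
  \<open>3623/5832 = 1 - (47/54)\<^sup>2/2\<close> bounds \<open>Re (x\<^sub>i\<^sup>* z\<^sub>i)\<close> from below once \<open>\<bar>x\<^sub>i - z\<^sub>i\<bar> \<le> 47/54\<close>.\<close>

lemma sdp_arith:
  fixes q s L d :: real
  assumes q2: "2 \<le> q^2" and q0: "0 \<le> q" and s0: "0 \<le> s" and s324: "324 * s^2 \<le> q"
    and L0: "0 \<le> L" and Lq: "L^2 \<le> q" and d72: "d^2 \<le> 72 * s^2" and d9: "d \<le> 9 * s"
  shows "6 * (L + 29 * s) * s / q \<le> 47/54"
    and "3 * s * q * (L + d) \<le> q^2/4"
    and "d^2 \<le> 2 * q / 9"
    and "0 < (q^2 - q/9) * (3623/5832) - q^2/4 - 2*q/9 - 3 * s * q"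
proof -
  have q75: "7/5 < q"
    using q2 q0 power2_less_imp_less[of "7/5" q] by (simp add: power2_eq_square)
  have "(18 * (s * L))^2 = (324 * s^2) * L^2" by (simp add: power_mult_distrib)
  also have "\<dots> \<le> q * q" using s324 Lq L0 q0 by (intro mult_mono) auto
  finally have sL: "18 * (s * L) \<le> q"
    using q0 power2_le_imp_le[of "18 * (s * L)" q] by (simp add: power2_eq_square)
  have "6 * (L + 29 * s) * s = 6 * (s * L) + 174 * s^2" by (simp add: power2_eq_square algebra_simps)
  also have "\<dots> \<le> (47/54) * q" using sL s324 by simp
  finally show "6 * (L + 29 * s) * s / q \<le> 47/54" using q75 by (simp add: divide_le_eq)
  have "3 * s * q * L \<le> q * q / 6"
    using sL q0 mult_left_mono[OF sL q0] by (simp add: mult_ac)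
  moreover have "3 * s * q * d \<le> q * q / 12"
  proof -
    have "3 * s * q * d \<le> 3 * s * q * (9 * s)" using d9 s0 q0 by (intro mult_left_mono) auto
    also have "\<dots> = q * (324 * s^2) / 12" by (simp add: power2_eq_square)
    also have "\<dots> \<le> q * q / 12" using s324 q0 by (intro divide_right_mono mult_left_mono) auto
    finally show ?thesis .
  qed
  ultimately show "3 * s * q * (L + d) \<le> q^2/4" by (simp add: algebra_simps power2_eq_square)
  show "d^2 \<le> 2 * q / 9" using d72 s324 by simp
  have "(18 * s - 6/5)^2 = 324 * s^2 - (216/5) * s + 36/25" by (simp add: power2_eq_square algebra_simps)
  then have "s \<le> (5/216) * q + 1/30" using s324 zero_le_power2[of "18 * s - 6/5"] by linarith
  then have "3 * s * q \<le> 3 * ((5/216) * q + 1/30) * q" using q0 by (intro mult_right_mono) auto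
  also have "\<dots> = 5 * q^2 / 72 + q / 10" by (simp add: power2_eq_square algebra_simps)
  finally have "3 * s * q \<le> 5 * q^2 / 72 + q / 10" .
  moreover have "(7/5) * q \<le> q^2" using q75 q0 by (simp add: power2_eq_square mult_right_mono)
  ultimately show "0 < (q^2 - q/9) * (3623/5832) - q^2/4 - 2*q/9 - 3 * s * q"
    using q75 by (simp add: algebra_simps)
qed

abbreviation spiked :: "complex^'n \<Rightarrow> real \<Rightarrow> complex^'n^'n \<Rightarrow> complex^'n^'n" where
  "spiked z \<sigma> W \<equiv> outer z z + (\<chi> i j. complex_of_real \<sigma> * W $ i $ j)"

lemma spiked_mult_vec: "spiked z \<sigma> W *v y = cinner z y *s z + of_real \<sigma> *s (W *v y)"
proof -
  have "(spiked z \<sigma> W *v y) $ i = z$i * cinner z y + of_real \<sigma> * (W *v y)$i" for i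
  proof -
    have "(spiked z \<sigma> W *v y) $ i = (\<Sum>j\<in>UNIV. z$i * (cnj (z$j) * y$j) + of_real \<sigma> * (W$i$j * y$j))"
      unfolding matrix_vector_mult_nth by (intro sum.cong refl) (simp add: outer_def distrib_right mult.assoc)
    then show ?thesis
      by (simp add: sum.distrib sum_distrib_left cinner_def matrix_vector_mult_nth)
  qed
  then show ?thesis by (simp add: vec_eq_iff mult.commute)
qed

lemma Re_qform_spiked: "Re (qform (spiked z \<sigma> W) y) = (cmod (cinner z y))^2 + \<sigma> * Re (qform W y)"
proof -
  have "qform (spiked z \<sigma> W) y = cinner y z * cinner z y + of_real \<sigma> * qform W y"
    unfolding qform_def spiked_mult_vec by (simp add: cinner_add_right cinner_scale_right)
  moreover have "cinner y z * cinner z y = of_real ((cmod (cinner z y))^2)"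
    by (metis cnj_cinner complex_norm_square mult.commute)
  ultimately show ?thesis by simp
qed

lemma hermitian_spiked:
  assumes "hermitian W"
  shows "hermitian (spiked z \<sigma> W)"
  unfolding hermitian_def
proof (intro allI)
  fix i j
  have "W$i$j = cnj (W$j$i)" using assms unfolding hermitian_def by blast
  then show "spiked z \<sigma> W $ i $ j = cnj (spiked z \<sigma> W $ j $ i)" by (simp add: outer_def)
qed

lemma Re_qform_diff_hermitian:
  assumes "hermitian W"
  shows "Re (qform W x) - Re (qform W z) = Re (cinner (x - z) (W *v (x + z)))"
proof -
  have "cinner (x - z) (W *v (x + z)) = qform W x + cinner x (W *v z) - cinner z (W *v x) - qform W z"
    unfolding qform_def by (simp add: matrix_vector_right_distrib cinner_add_right cinner_diff_left)
  moreover have "cinner x (W *v z) = cnj (cinner z (W *v x))"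
    by (metis hermitian_cinner_adjoint[OF assms] cnj_cinner)
  ultimately show ?thesis by simp
qed

subsection \<open>Global maximizers of the perturbed synchronization problem\<close>

locale sync_optimizer =
  fixes z x :: "complex^'n" and W :: "complex^'n^'n" and \<sigma> :: real
  assumes card_ge_2: "2 \<le> CARD('n)"
    and sigma_nonneg: "0 \<le> \<sigma>"
    and unimodular_z: "unimodular z"
    and discordant: "discordant z W"
    and unimodular_x: "unimodular x"
    and optimal: "\<And>y. unimodular y \<Longrightarrow> Re (qform (spiked z \<sigma> W) y) \<le> Re (qform (spiked z \<sigma> W) x)"
    and phase: "cinner z x = of_real (cmod (cinner z x))"
begin

lemma hermitian_W: "hermitian W"
  and op_norm_W: "op_norm W \<le> 3 * sqrt (real CARD('n))"
  and inf_norm_Wz: "inf_norm (W *v z) \<le> 3 * sqrt (real CARD('n)) * sqrt (ln (real CARD('n)))"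
  using discordant unfolding discordant_def by (simp_all add: real_sqrt_mult)

lemma norm_diff_add_power2:
  "(norm (x - z))^2 = 2 * real CARD('n) - 2 * cmod (cinner z x)"
  "(norm (x + z))^2 = 2 * real CARD('n) + 2 * cmod (cinner z x)"
proof -
  have zz: "cinner z z = of_real (real CARD('n))" and xx: "cinner x x = of_real (real CARD('n))"
    using cinner_self_unimodular unimodular_x unimodular_z by simp_all
  have xz: "cinner x z = of_real (cmod (cinner z x))"
    using phase cnj_cinner[of z x] by (metis complex_cnj_complex_of_real)
  have "of_real ((norm (x - z))^2) = cinner x x - cinner x z - cinner z x + cinner z z"
    unfolding cinner_self[symmetric] by (simp add: cinner_diff_left cinner_diff_right)
  also have "\<dots> = of_real (2 * real CARD('n) - 2 * cmod (cinner z x))"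
    using zz xx xz phase by simp
  finally show "(norm (x - z))^2 = 2 * real CARD('n) - 2 * cmod (cinner z x)"
    using of_real_eq_iff by blast
  have "of_real ((norm (x + z))^2) = cinner x x + cinner x z + cinner z x + cinner z z"
    unfolding cinner_self[symmetric] by (simp add: cinner_add_left cinner_add_right)
  also have "\<dots> = of_real (2 * real CARD('n) + 2 * cmod (cinner z x))"
    using zz xx xz phase by simp
  finally show "(norm (x + z))^2 = 2 * real CARD('n) + 2 * cmod (cinner z x)"
    using of_real_eq_iff by blast
qed

text \<open>Comparing the objective at \<open>x\<close> and at \<open>z\<close>: the loss \<open>n\<^sup>2 - \<bar>z\<^sup>* x\<bar>\<^sup>2 = \<parallel>x - z\<parallel>\<^sup>2 \<parallel>x + z\<parallel>\<^sup>2 / 4\<close>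
  in the spike is paid for by the noise, which gains at most \<open>3 \<sigma> sqrt n \<parallel>x - z\<parallel> \<parallel>x + z\<parallel>\<close>.\<close>

lemma norm_diff_mult_norm_add_le: "norm (x - z) * norm (x + z) \<le> 12 * \<sigma> * sqrt (real CARD('n))"
proof -
  define d where "d = norm (x - z)"
  define p where "p = norm (x + z)"
  define q where "q = sqrt (real CARD('n))"
  define m where "m = cmod (cinner z x)"
  have "Re (qform (spiked z \<sigma> W) z) \<le> Re (qform (spiked z \<sigma> W) x)"
    using optimal unimodular_z by blast
  moreover have "cinner z z = of_real (real CARD('n))"
    using cinner_self_unimodular unimodular_z by simp
  ultimately have "(real CARD('n))^2 - m^2 \<le> \<sigma> * (Re (qform W x) - Re (qform W z))"
    unfolding Re_qform_spiked m_def by (simp add: algebra_simps)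
  also have "Re (qform W x) - Re (qform W z) \<le> d * (3 * q * p)"
  proof -
    have "Re (cinner (x - z) (W *v (x + z))) \<le> d * norm (W *v (x + z))"
      unfolding d_def using complex_Re_le_cmod norm_cinner_le order_trans by blast
    also have "\<dots> \<le> d * (op_norm W * p)"
      unfolding p_def d_def by (intro mult_left_mono norm_matrix_vector_mult_le) auto
    also have "\<dots> \<le> d * (3 * q * p)"
      unfolding d_def p_def q_def using op_norm_W by (intro mult_left_mono mult_right_mono) auto
    finally show ?thesis by (simp add: Re_qform_diff_hermitian[OF hermitian_W])
  qed
  finally have "(real CARD('n))^2 - m^2 \<le> \<sigma> * (d * (3 * q * p))"
    using sigma_nonneg by (simp add: mult_left_mono)
  moreover have "(d * p)^2 = (2 * real CARD('n) - 2 * m) * (2 * real CARD('n) + 2 * m)"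
    using norm_diff_add_power2 unfolding d_def p_def m_def by (simp add: power_mult_distrib)
  moreover have "\<dots> = 4 * ((real CARD('n))^2 - m^2)"
    by (simp add: power2_eq_square algebra_simps)
  ultimately have "(d * p) * (d * p) \<le> (12 * \<sigma> * q) * (d * p)"
    by (simp add: power2_eq_square mult_ac)
  moreover have "0 \<le> 12 * \<sigma> * q" using sigma_nonneg unfolding q_def by simp
  ultimately show ?thesis
    using mult_right_le_imp_le[of "d * p" "d * p" "12 * \<sigma> * q"] unfolding d_def p_def q_def by fastforce
qed

lemma norm_diff_power2_le: "(norm (x - z))^2 \<le> 72 * \<sigma>^2"
proof -
  have "(norm (x - z) * norm (x + z))^2 \<le> (12 * \<sigma> * sqrt (real CARD('n)))^2"
    using norm_diff_mult_norm_add_le by (intro power_mono) auto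
  then have "(norm (x - z))^2 * (norm (x + z))^2 \<le> (72 * \<sigma>^2) * (2 * real CARD('n))"
    by (simp add: power_mult_distrib)
  moreover have "(norm (x - z))^2 * (2 * real CARD('n)) \<le> (norm (x - z))^2 * (norm (x + z))^2"
    using norm_diff_add_power2(2) by (intro mult_left_mono) auto
  ultimately have "(norm (x - z))^2 * (2 * real CARD('n)) \<le> (72 * \<sigma>^2) * (2 * real CARD('n))"
    by linarith
  then show ?thesis by simp
qed

lemma norm_diff_le: "norm (x - z) \<le> 9 * \<sigma>"
proof (rule power2_le_imp_le)
  have "(9 * \<sigma>)^2 = 81 * \<sigma>^2" by (simp add: power_mult_distrib)
  then show "(norm (x - z))^2 \<le> (9 * \<sigma>)^2"
    using norm_diff_power2_le zero_le_power2[of \<sigma>] by linarith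
qed (use sigma_nonneg in simp)

lemma sqrt_ln_card_power2_le: "(sqrt (ln (real CARD('n))))^2 \<le> sqrt (real CARD('n))"
  using card_ge_2 ln_le_sqrt[of "real CARD('n)"] by simp

definition multiplier :: "'n \<Rightarrow> real" where
  "multiplier i = Re (cnj (x$i) * (spiked z \<sigma> W *v x)$i)"

lemma spiked_mult_x_nth: "(spiked z \<sigma> W *v x)$i = of_real (multiplier i) * x$i"
  and diag_spiked_le_multiplier: "Re (spiked z \<sigma> W $ i $ i) \<le> multiplier i"
proof -
  obtain l where l: "(spiked z \<sigma> W *v x)$i = of_real l * x$i" "Re (spiked z \<sigma> W $ i $ i) \<le> l"
    using unimodular_maximizer_stationary[OF hermitian_spiked[OF hermitian_W] unimodular_x optimal] .
  have "multiplier i = l"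
    unfolding multiplier_def l(1) using cnj_mult_self_unimodular[OF unimodular_x, of i]
    by (simp add: mult.left_commute)
  then show "(spiked z \<sigma> W *v x)$i = of_real (multiplier i) * x$i"
    and "Re (spiked z \<sigma> W $ i $ i) \<le> multiplier i" using l by simp_all
qed

lemma spiked_mult_x_nth_eq:
  "(spiked z \<sigma> W *v x)$i = of_real (cmod (cinner z x)) * z$i + of_real \<sigma> * (W *v x)$i"
  unfolding spiked_mult_vec phase[symmetric] by simp

lemma multiplier_ge: "1 - 3 * \<sigma> * sqrt (real CARD('n)) \<le> multiplier i"
proof -
  have "Re (spiked z \<sigma> W $ i $ i) = 1 + \<sigma> * Re (W$i$i)"
    using cnj_mult_self_unimodular[OF unimodular_z, of i] by (simp add: outer_def mult.commute)
  moreover have "- op_norm W \<le> Re (W$i$i)"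
    using abs_Re_le_cmod[of "W$i$i"] cmod_diag_le_op_norm[of W i] by linarith
  then have "- (3 * sqrt (real CARD('n))) \<le> Re (W$i$i)" using op_norm_W by linarith
  then have "\<sigma> * - (3 * sqrt (real CARD('n))) \<le> \<sigma> * Re (W$i$i)"
    using sigma_nonneg by (rule mult_left_mono)
  ultimately show ?thesis using diag_spiked_le_multiplier[of i] by simp
qed

lemma cmod_noise_nth_le:
  "cmod (of_real \<sigma> * (W *v x)$i)
     \<le> 3 * \<sigma> * sqrt (real CARD('n)) * (sqrt (ln (real CARD('n))) + norm (x - z))"
proof -
  have "W *v x = W *v z + W *v (x - z)" by (simp add: matrix_vector_mult_diff_distrib)
  then have "cmod ((W *v x)$i) \<le> cmod ((W *v z)$i) + cmod ((W *v (x - z))$i)"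
    by (simp add: norm_triangle_ineq)
  moreover have "cmod ((W *v z)$i) \<le> inf_norm (W *v z)"
    unfolding inf_norm_def by (rule Max_ge) auto
  moreover have "cmod ((W *v (x - z))$i) \<le> 3 * sqrt (real CARD('n)) * norm (x - z)"
    using cmod_matrix_vector_mult_nth_le[of W "x - z" i]
      mult_right_mono[OF op_norm_W norm_ge_zero[of "x - z"]] by linarith
  ultimately have "cmod ((W *v x)$i) \<le> 3 * sqrt (real CARD('n)) * (sqrt (ln (real CARD('n))) + norm (x - z))"
    using inf_norm_Wz by (simp add: algebra_simps)
  then have "\<sigma> * cmod ((W *v x)$i)
      \<le> \<sigma> * (3 * sqrt (real CARD('n)) * (sqrt (ln (real CARD('n))) + norm (x - z)))"
    using sigma_nonneg by (rule mult_left_mono)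
  then show ?thesis using sigma_nonneg by (simp add: norm_mult mult_ac)
qed

text \<open>With \<open>\<lambda>\<^sub>i = multiplier i\<close>, the stationarity equation at coordinate \<open>i\<close> reads
  \<open>\<lambda>\<^sub>i x\<^sub>i = \<bar>z\<^sup>* x\<bar> z\<^sub>i + \<sigma> (W x)\<^sub>i\<close>. A negative multiplier \<open>\<lambda>\<^sub>i\<close> contradicts the lower
  bound on \<open>\<lambda>\<^sub>i\<close>; a nonnegative one pulls \<open>x\<^sub>i\<close> towards \<open>z\<^sub>i\<close>.\<close>

lemma cmod_diff_nth_le:
  "cmod ((x - z)$i) \<le> 6 * (sqrt (ln (real CARD('n))) + 29 * \<sigma>) * \<sigma> / sqrt (real CARD('n))"
proof -
  define q where "q = sqrt (real CARD('n))"
  define L where "L = sqrt (ln (real CARD('n)))"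
  define d where "d = norm (x - z)"
  define R where "R = 6 * (L + 29 * \<sigma>) * \<sigma> / q"
  define e where "e = of_real \<sigma> * (W *v x)$i"
  have q1: "1 \<le> q" and q2: "q^2 = real CARD('n)" unfolding q_def using card_ge_2 by simp_all
  have L: "0 \<le> L" "L^2 \<le> q" unfolding L_def q_def using sqrt_ln_card_power2_le by simp_all
  have d: "0 \<le> d" "d^2 \<le> 72 * \<sigma>^2" "d \<le> 9 * \<sigma>"
    unfolding d_def using norm_diff_power2_le norm_diff_le by simp_all
  have xz: "cmod (x$i) = 1" "cmod (z$i) = 1"
    using unimodular_x unimodular_z unfolding unimodular_def by auto
  have "cmod (cinner z x) = q^2 - d^2/2"
    using norm_diff_add_power2(1) q2 unfolding d_def by linarith
  then have eq: "of_real (multiplier i) * x$i = of_real (q^2 - d^2/2) * z$i + e"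
    using spiked_mult_x_nth_eq[of i] unfolding spiked_mult_x_nth e_def by simp
  have ce: "cmod e \<le> 3 * \<sigma> * q * (L + d)"
    using cmod_noise_nth_le unfolding e_def q_def L_def d_def .
  consider "d \<le> R \<or> 2 \<le> R" | "87 * \<sigma>^2 < q" "9 * (\<sigma> * L) < q"
    using linf_arith_regime[OF sigma_nonneg q1 L] unfolding R_def by fastforce
  then show ?thesis
  proof cases
    case 1
    moreover have "cmod ((x - z)$i) \<le> d" unfolding d_def by (rule Finite_Cartesian_Product.norm_nth_le)
    moreover have "cmod ((x - z)$i) \<le> 2" using norm_triangle_ineq4[of "x$i" "z$i"] xz by simp
    ultimately show ?thesis unfolding R_def q_def L_def by auto
  next
    case 2
    note aligned = linf_arith_aligned[OF sigma_nonneg q1 2 L(1) d]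
    show ?thesis
    proof (cases "0 \<le> multiplier i")
      case True
      have "cmod (x$i - z$i) \<le> 2 * cmod e / (q^2 - d^2/2)"
        using norm_diff_le_of_scaled_eq[OF xz True aligned(1) eq] .
      also have "\<dots> \<le> 2 * (3 * \<sigma> * q * (L + d)) / (q^2 - d^2/2)"
        using ce aligned(1) by (intro divide_right_mono) auto
      also have "\<dots> \<le> R" unfolding R_def by (rule aligned(2))
      finally show ?thesis unfolding R_def q_def L_def by simp
    next
      case False
      then have "q^2 - d^2/2 - cmod e \<le> - multiplier i"
        using neg_scaled_eq_bound[OF xz _ eq] by simp
      moreover have "1 - 3 * \<sigma> * q \<le> multiplier i" using multiplier_ge unfolding q_def .
      ultimately have "q^2 - d^2/2 \<le> 3 * \<sigma> * q * (L + d + 1) - 1" using ce by (simp add: algebra_simps)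
      then show ?thesis using linf_arith_reversed[OF sigma_nonneg q1 2 d(2,3)] by linarith
    qed
  qed
qed

lemma inf_norm_diff_le:
  "inf_norm (x - z) \<le> 6 * (sqrt (ln (real CARD('n))) + 29 * \<sigma>) * \<sigma> / sqrt (real CARD('n))"
  unfolding inf_norm_def using cmod_diff_nth_le by (subst Max_le_iff) auto

abbreviation certificate :: "complex^'n^'n" where
  "certificate \<equiv> diag_mat multiplier - spiked z \<sigma> W"

lemma certificate_mult_x: "certificate *v x = 0"
  by (simp add: vec_eq_iff matrix_vector_mult_diff_rdistrib diag_mat_mult_vec_nth spiked_mult_x_nth)

lemma hermitian_certificate: "hermitian certificate"
  by (rule hermitian_diff[OF hermitian_diag_mat hermitian_spiked[OF hermitian_W]])

lemma Re_qform_certificate_orthogonal: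
  assumes lower: "\<And>i. B \<le> multiplier i" and u: "cinner x u = 0"
  shows "(B - (norm (x - z))^2 - 3 * \<sigma> * sqrt (real CARD('n))) * (norm u)^2 \<le> Re (qform certificate u)"
proof -
  have "B * (norm u)^2 \<le> (\<Sum>i\<in>UNIV. multiplier i * (cmod (u$i))^2)"
    unfolding norm_vec_power2 sum_distrib_left using lower by (intro sum_mono mult_right_mono) auto
  moreover have "(cmod (cinner z u))^2 \<le> (norm (x - z))^2 * (norm u)^2"
  proof -
    have "cmod (cinner z u) = cmod (cinner (x - z) u)" using u by (simp add: cinner_diff_left)
    also have "\<dots> \<le> norm (x - z) * norm u" by (rule norm_cinner_le)
    finally show ?thesis by (metis norm_ge_zero power_mono power_mult_distrib)
  qed
  moreover have "\<sigma> * Re (qform W u) \<le> \<sigma> * (3 * sqrt (real CARD('n)) * (norm u)^2)"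
  proof -
    have "op_norm W * (norm u)^2 \<le> 3 * sqrt (real CARD('n)) * (norm u)^2"
      using op_norm_W by (rule mult_right_mono) simp
    then show ?thesis
      using Re_qform_le_op_norm[of W u] sigma_nonneg by (simp add: mult_left_mono)
  qed
  moreover have "Re (qform certificate u)
      = (\<Sum>i\<in>UNIV. multiplier i * (cmod (u$i))^2) - (cmod (cinner z u))^2 - \<sigma> * Re (qform W u)"
    by (simp add: qform_diff qform_diag_mat Re_qform_spiked)
  ultimately show ?thesis by (simp add: algebra_simps)
qed

context
  assumes small_noise: "\<sigma> \<le> (1/18) * root 4 (real CARD('n))"
begin

lemma sigma_power2_le: "324 * \<sigma>^2 \<le> sqrt (real CARD('n))"
proof -
  have "(18 * \<sigma>)^2 \<le> (root 4 (real CARD('n)))^2"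
    using small_noise sigma_nonneg by (intro power_mono) auto
  then show ?thesis by (simp add: root_4_power2 power_mult_distrib)
qed

lemma sdp_regime:
  shows "6 * (sqrt (ln (real CARD('n))) + 29 * \<sigma>) * \<sigma> / sqrt (real CARD('n)) \<le> 47/54"
    and "3 * \<sigma> * sqrt (real CARD('n)) * (sqrt (ln (real CARD('n))) + norm (x - z)) \<le> real CARD('n)/4"
    and "(norm (x - z))^2 \<le> 2 * sqrt (real CARD('n)) / 9"
    and "0 < (real CARD('n) - sqrt (real CARD('n))/9) * (3623/5832) - real CARD('n)/4
              - 2 * sqrt (real CARD('n))/9 - 3 * \<sigma> * sqrt (real CARD('n))"
  using sdp_arith[OF _ _ sigma_nonneg sigma_power2_le _ sqrt_ln_card_power2_le
      norm_diff_power2_le norm_diff_le] card_ge_2 by simp_all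

lemma multiplier_lower:
  "(real CARD('n) - sqrt (real CARD('n))/9) * (3623/5832) - real CARD('n)/4 \<le> multiplier i"
proof -
  define m where "m = cmod (cinner z x)"
  define e where "e = of_real \<sigma> * (W *v x)$i"
  have xz: "cmod (x$i) = 1" "cmod (z$i) = 1"
    using unimodular_x unimodular_z unfolding unimodular_def by auto
  have "multiplier i = m * Re (cnj (x$i) * z$i) + Re (cnj (x$i) * e)"
    unfolding multiplier_def spiked_mult_x_nth_eq m_def e_def by (simp add: algebra_simps)
  moreover have "(real CARD('n) - sqrt (real CARD('n))/9) * (3623/5832) \<le> m * Re (cnj (x$i) * z$i)"
  proof (rule mult_mono)
    show "real CARD('n) - sqrt (real CARD('n))/9 \<le> m"
      using norm_diff_add_power2(1) sdp_regime(3) unfolding m_def by linarith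
    have "(cmod (x$i - z$i))^2 \<le> (47/54)^2"
      using cmod_diff_nth_le[of i] sdp_regime(1) by (intro power_mono) auto
    moreover have "(cmod (x$i - z$i))^2 = (cmod (x$i))^2 + (cmod (z$i))^2 - 2 * Re (cnj (x$i) * z$i)"
      by (simp only: cmod_power2) (simp add: power2_eq_square algebra_simps)
    then have "(cmod (x$i - z$i))^2 = 2 - 2 * Re (cnj (x$i) * z$i)" using xz by simp
    ultimately show "3623/5832 \<le> Re (cnj (x$i) * z$i)" by (simp add: power2_eq_square)
  qed (simp_all add: m_def)
  moreover have "- (real CARD('n)/4) \<le> Re (cnj (x$i) * e)"
    using abs_Re_le_cmod[of "cnj (x$i) * e"] xz cmod_noise_nth_le[of i] sdp_regime(2)
    unfolding e_def by (simp add: norm_mult)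
  ultimately show ?thesis by linarith
qed

lemma certificate_nonneg: "0 \<le> Re (qform certificate v)"
  and certificate_kernel: "Re (qform certificate v) = 0 \<Longrightarrow> \<exists>c. v = c *s x"
proof -
  define c where "c = cinner x v / of_real (real CARD('n))"
  define u where "u = v - c *s x"
  have v: "v = c *s x + u" unfolding u_def by simp
  have u: "cinner x u = 0"
    unfolding u_def c_def
    by (simp add: cinner_diff_right cinner_scale_right cinner_self_unimodular[OF unimodular_x])
  define K where "K = (real CARD('n) - sqrt (real CARD('n))/9) * (3623/5832) - real CARD('n)/4
      - (norm (x - z))^2 - 3 * \<sigma> * sqrt (real CARD('n))"
  have K: "0 < K" unfolding K_def using sdp_regime(3,4) by linarith
  have main: "K * (norm u)^2 \<le> Re (qform certificate v)"
    unfolding v qform_add_kernel[OF hermitian_certificate certificate_mult_x] K_def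
    using multiplier_lower u by (rule Re_qform_certificate_orthogonal)
  moreover have "0 \<le> K * (norm u)^2" using K by simp
  ultimately show "0 \<le> Re (qform certificate v)" by linarith
  assume "Re (qform certificate v) = 0"
  then have "u = 0" using main K by (simp add: mult_le_0_iff)
  then show "\<exists>c. v = c *s x" using v by auto
qed

lemma sdp_unique_optimum:
  assumes "sdp_feasible X" "X \<noteq> outer x x"
  shows "Re (trace_c (spiked z \<sigma> W ** X)) < Re (trace_c (spiked z \<sigma> W ** outer x x))"
  using sdp_unique_optimum_of_certificate[OF unimodular_x certificate_mult_x certificate_nonneg
      certificate_kernel assms] .

end

end

theorem lemma3:
  fixes z x :: "complex^'n" and W :: "complex^'n^'n" and \<sigma> :: real
  assumes n2: "CARD('n) \<ge> 2"
    and sig: "\<sigma> \<ge> 0"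
    and z: "unimodular z"
    and W: "hermitian W" "discordant z W"
    and x: "unimodular x"
    and opt: "\<forall>y. unimodular y \<longrightarrow>
        Re (qform (outer z z + (\<chi> i j. complex_of_real \<sigma> * W $ i $ j)) y) \<le> Re (qform (outer z z + (\<chi> i j. complex_of_real \<sigma> * W $ i $ j)) x)"
    and phase: "cinner z x = of_real (cmod (cinner z x))"
  shows "inf_norm (x - z) \<le> 6 * (sqrt (ln (real CARD('n))) + 29 * \<sigma>) * \<sigma> / sqrt (real CARD('n))
     \<and> norm (x - z) \<le> 12 * \<sigma>
     \<and> (\<sigma> \<le> (1/18) * root 4 (real CARD('n)) \<longrightarrow>
          sdp_feasible (outer x x) \<and>
          (\<forall>X. sdp_feasible X \<and> X \<noteq> outer x x \<longrightarrow>
             Re (trace_c ((outer z z + (\<chi> i j. complex_of_real \<sigma> * W $ i $ j)) ** X))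
               < Re (trace_c ((outer z z + (\<chi> i j. complex_of_real \<sigma> * W $ i $ j)) ** outer x x))))"
proof -
  interpret sync_optimizer z x W \<sigma>
    using n2 sig z W(2) x opt phase by unfold_locales blast+
  have "norm (x - z) \<le> 12 * \<sigma>" using norm_diff_le sig by linarith
  then show ?thesis
    using inf_norm_diff_le sdp_feasible_outer[OF x] sdp_unique_optimum by blast
qed

end
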